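(* Let $T$ be a sparse tournament of order $n>4$ and let $\sigma$ be a sparse ordering of $V(T)$. Then for every vertex $v$ with $d^-(v)=i$, the position of $v$ in $\sigma$ (positions numbered $1,\dots,n$) belongs to $\{i,i+1,i+2\}\cap[n]$.
   Context: A tournament is a digraph with exactly one arc between each pair of distinct vertices; $d^-(v)$ is the in-degree of $v$ and $[n]=\{1,\dots,n\}$. For an ordering $\sigma$ of $V(T)$, an arc $(x,y)$ is backward if $y$ precedes $x$ in $\sigma$. An ordering is sparse if every vertex is incident to at most one backward arc; a tournament is sparse if it admits a sparse ordering. *)

theory Defs
  imports Main
begin

text \<open>A digraph is given by a vertex set V and an arc relation A (A x y means the arc (x,y)).\<close>

definition tournament :: "'a set \<Rightarrow> ('a \<Rightarrow> 'a \<Rightarrow> bool) \<Rightarrow> bool" where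
  "tournament V A \<longleftrightarrow> finite V
     \<and> (\<forall>x y. A x y \<longrightarrow> x \<in> V \<and> y \<in> V)
     \<and> (\<forall>x. \<not> A x x)
     \<and> (\<forall>x\<in>V. \<forall>y\<in>V. x \<noteq> y \<longrightarrow> (A x y \<longleftrightarrow> \<not> A y x))"

definition in_degree :: "'a set \<Rightarrow> ('a \<Rightarrow> 'a \<Rightarrow> bool) \<Rightarrow> 'a \<Rightarrow> nat" where
  "in_degree V A v = card {u \<in> V. A u v}"

text \<open>An ordering of V is a list enumerating V without repetition; the position of v is
  its (1-based) index in the list.\<close>

definition is_ordering :: "'a set \<Rightarrow> 'a list \<Rightarrow> bool" where
  "is_ordering V \<sigma> \<longleftrightarrow> distinct \<sigma> \<and> set \<sigma> = V"

definition pos :: "'a list \<Rightarrow> 'a \<Rightarrow> nat" where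
  "pos \<sigma> v = Suc (THE k. k < length \<sigma> \<and> \<sigma> ! k = v)"

definition backward :: "('a \<Rightarrow> 'a \<Rightarrow> bool) \<Rightarrow> 'a list \<Rightarrow> 'a \<times> 'a \<Rightarrow> bool" where
  "backward A \<sigma> e \<longleftrightarrow> A (fst e) (snd e) \<and> pos \<sigma> (snd e) < pos \<sigma> (fst e)"

definition sparse_ordering :: "'a set \<Rightarrow> ('a \<Rightarrow> 'a \<Rightarrow> bool) \<Rightarrow> 'a list \<Rightarrow> bool" where
  "sparse_ordering V A \<sigma> \<longleftrightarrow> is_ordering V \<sigma> \<and>
     (\<forall>v\<in>V. card {e. backward A \<sigma> e \<and> (fst e = v \<or> snd e = v)} \<le> 1)"

definition sparse_tournament :: "'a set \<Rightarrow> ('a \<Rightarrow> 'a \<Rightarrow> bool) \<Rightarrow> bool" where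
  "sparse_tournament V A \<longleftrightarrow> tournament V A \<and> (\<exists>\<sigma>. sparse_ordering V A \<sigma>)"

end

theory Submission
  imports Defs
begin

(* If v sits at position p, then counting the p - 1 vertices before v and correcting for
   the arcs at v that point the other way gives
     d^-(v) + #(backward arcs leaving v) + 1 = p + #(backward arcs entering v).
   In a sparse ordering the two correction terms sum to at most 1, so p is d^-(v),
   d^-(v) + 1 or d^-(v) + 2. *)

lemma pos_nth:
  assumes "distinct xs" "j < length xs"
  shows "pos xs (xs ! j) = Suc j"
proof -
  have "(THE k. k < length xs \<and> xs ! k = xs ! j) = j"
    using assms by (auto simp: nth_eq_iff_index_eq)
  then show ?thesis by (simp add: pos_def)
qed

lemma pos_in_range:
  assumes "distinct xs" "v \<in> set xs"
  shows "pos xs v \<in> {1..length xs}"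
  using assms by (auto simp: in_set_conv_nth pos_nth)

lemma pos_inj:
  assumes "distinct xs" "u \<in> set xs" "w \<in> set xs" "pos xs u = pos xs w"
  shows "u = w"
  using assms by (auto simp: in_set_conv_nth pos_nth)

lemma card_pos_less:
  assumes "distinct xs" "v \<in> set xs"
  shows "card {u \<in> set xs. pos xs u < pos xs v} = pos xs v - 1"
proof -
  obtain k where k: "k < length xs" "xs ! k = v"
    using assms(2) by (auto simp: in_set_conv_nth)
  have "{u \<in> set xs. pos xs u < pos xs v} = (!) xs ` {..<k}"
  proof (intro set_eqI iffI)
    fix u assume "u \<in> {u \<in> set xs. pos xs u < pos xs v}"
    then obtain j where "j < length xs" "xs ! j = u" "pos xs u < pos xs v"
      by (auto simp: in_set_conv_nth)
    then show "u \<in> (!) xs ` {..<k}"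
      using assms(1) k by (auto simp: pos_nth)
  next
    fix u assume "u \<in> (!) xs ` {..<k}"
    then obtain j where "j < k" "u = xs ! j" by blast
    then show "u \<in> {u \<in> set xs. pos xs u < pos xs v}"
      using assms(1) k pos_nth[OF assms(1) k(1)] by (simp add: pos_nth)
  qed
  moreover have "inj_on ((!) xs) {..<k}"
    using inj_on_nth[OF assms(1)] k(1) by simp
  ultimately show ?thesis
    using k pos_nth[OF assms(1) k(1)] by (simp add: card_image)
qed

lemma in_degree_pos_balance:
  assumes T: "tournament V A" and \<sigma>: "is_ordering V \<sigma>" and "v \<in> V"
  shows "in_degree V A v + card {u. backward A \<sigma> (v, u)} + 1
           = pos \<sigma> v + card {u. backward A \<sigma> (u, v)}"
proof -
  have fin: "finite V" and arcs_in_V: "\<And>x y. A x y \<Longrightarrow> x \<in> V \<and> y \<in> V"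
    and irrefl: "\<And>x. \<not> A x x"
    and total: "\<And>x y. x \<in> V \<Longrightarrow> y \<in> V \<Longrightarrow> x \<noteq> y \<Longrightarrow> A x y \<longleftrightarrow> \<not> A y x"
    using T unfolding tournament_def by blast+
  have dist: "distinct \<sigma>" and setV: "set \<sigma> = V"
    using \<sigma> by (auto simp: is_ordering_def)
  define before where "before = {u \<in> V. pos \<sigma> u < pos \<sigma> v}"
  define out_back where "out_back = {u. backward A \<sigma> (v, u)}"
  define in_back where "in_back = {u. backward A \<sigma> (u, v)}"
  have card_before: "card before = pos \<sigma> v - 1"
    using card_pos_less[OF dist] \<open>v \<in> V\<close> setV by (simp add: before_def)
  have pos_ge1: "pos \<sigma> v \<ge> 1"
    using pos_in_range[OF dist] \<open>v \<in> V\<close> setV by auto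
  have out_sub: "out_back \<subseteq> before"
    using arcs_in_V by (auto simp: out_back_def before_def backward_def)
  have in_fin: "finite in_back"
    using fin arcs_in_V by (auto simp: in_back_def backward_def intro: finite_subset)
  have pos_ne: "pos \<sigma> u \<noteq> pos \<sigma> v" if "u \<in> V" "u \<noteq> v" for u
    using pos_inj[OF dist] that \<open>v \<in> V\<close> setV by blast
  have in_nbhd: "{u \<in> V. A u v} = (before - out_back) \<union> in_back"
  proof (intro set_eqI iffI)
    fix u assume u: "u \<in> {u \<in> V. A u v}"
    then have "u \<noteq> v" "\<not> A v u"
      using irrefl total[OF _ \<open>v \<in> V\<close>] by auto
    with u show "u \<in> (before - out_back) \<union> in_back"
      using pos_ne[of u]
      by (cases "pos \<sigma> u < pos \<sigma> v") (auto simp: before_def out_back_def in_back_def backward_def)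
  next
    fix u assume "u \<in> (before - out_back) \<union> in_back"
    then show "u \<in> {u \<in> V. A u v}"
      using total[OF _ \<open>v \<in> V\<close>] arcs_in_V
      by (auto simp: before_def out_back_def in_back_def backward_def)
  qed
  have before_fin: "finite before"
    using fin by (simp add: before_def)
  have "(before - out_back) \<inter> in_back = {}"
    by (auto simp: before_def in_back_def backward_def)
  then have "in_degree V A v = card (before - out_back) + card in_back"
    using in_nbhd card_Un_disjoint[OF _ in_fin] before_fin by (simp add: in_degree_def)
  also have "\<dots> = card before - card out_back + card in_back"
    using card_Diff_subset[OF finite_subset[OF out_sub before_fin] out_sub] by simp
  finally have "in_degree V A v = card before - card out_back + card in_back" .
  moreover have "card out_back \<le> card before"
    using card_mono[OF before_fin out_sub] .
  ultimately show ?thesis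
    using card_before pos_ge1 by (simp add: out_back_def in_back_def)
qed

lemma sparse_ordering_backward_at_most_one:
  assumes T: "tournament V A" and sparse: "sparse_ordering V A \<sigma>" and "v \<in> V"
  shows "card {u. backward A \<sigma> (v, u)} + card {u. backward A \<sigma> (u, v)} \<le> 1"
proof -
  have fin: "finite V" and arcs_in_V: "\<And>x y. A x y \<Longrightarrow> x \<in> V \<and> y \<in> V"
    and irrefl: "\<And>x. \<not> A x x"
    using T unfolding tournament_def by blast+
  define E where "E = {e. backward A \<sigma> e \<and> (fst e = v \<or> snd e = v)}"
  define out_back where "out_back = {u. backward A \<sigma> (v, u)}"
  define in_back where "in_back = {u. backward A \<sigma> (u, v)}"
  have "finite out_back" "finite in_back"
    using fin arcs_in_V by (auto simp: out_back_def in_back_def backward_def intro: finite_subset)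
  moreover have "E = Pair v ` out_back \<union> (\<lambda>u. (u, v)) ` in_back"
    by (auto simp: E_def out_back_def in_back_def)
  moreover have "Pair v ` out_back \<inter> (\<lambda>u. (u, v)) ` in_back = {}"
    using irrefl by (auto simp: out_back_def in_back_def backward_def)
  ultimately have "card E = card out_back + card in_back"
    by (simp add: card_Un_disjoint card_image inj_on_def)
  moreover have "card E \<le> 1"
    using sparse \<open>v \<in> V\<close> by (simp add: sparse_ordering_def E_def)
  ultimately show ?thesis by (simp add: out_back_def in_back_def)
qed

theorem mainTheorem10:
  fixes V :: "'a set" and A :: "'a \<Rightarrow> 'a \<Rightarrow> bool" and \<sigma> :: "'a list"
  assumes "sparse_tournament V A"
    and "card V > 4"
    and "sparse_ordering V A \<sigma>"
    and "v \<in> V"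
    and "in_degree V A v = i"
  shows "pos \<sigma> v \<in> {i, i+1, i+2} \<inter> {1..card V}"
proof -
  have T: "tournament V A"
    using assms(1) by (simp add: sparse_tournament_def)
  have \<sigma>: "is_ordering V \<sigma>"
    using assms(3) by (simp add: sparse_ordering_def)
  have "pos \<sigma> v \<in> {i, i+1, i+2}"
    using in_degree_pos_balance[OF T \<sigma> assms(4)]
      sparse_ordering_backward_at_most_one[OF T assms(3,4)] assms(5) by auto
  moreover have "pos \<sigma> v \<in> {1..card V}"
    using \<sigma> pos_in_range assms(4) distinct_card by (fastforce simp: is_ordering_def)
  ultimately show ?thesis by blast
qed

end
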